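(* Let $\tau,t\in\mathbb{R}$ and let $\beta_n=\beta_n(\tau,t)$ be the recurrence coefficients of the monic orthogonal polynomials for the weight $\omega(x;\tau,t)=\exp(-x^6+\tau x^4+tx^2)$ on $\mathbb{R}$. Then for $n\ge1$ \begin{align*} 6\beta_n\big(&\beta_{n-2}\beta_{n-1}+\beta_{n-1}^2+2\beta_{n-1}\beta_n+\beta_{n-1}\beta_{n+1}+\beta_n^2+2\beta_n\beta_{n+1}+\beta_{n+1}^2+\beta_{n+1}\beta_{n+2}\big)\\ &-4\tau\beta_n(\beta_{n-1}+\beta_n+\beta_{n+1})-2t\beta_n=n. \end{align*}
   Context: The monic orthogonal polynomials satisfy $P_{n+1}(x)=xP_n(x)-\beta_nP_{n-1}(x)$ with $P_{-1}=0$, $P_0=1$, where $\beta_n>0$ for $n\ge1$. The convention $\beta_0=\beta_{-1}=0$ is used. *)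

theory Defs
  imports "HOL-Analysis.Analysis" "HOL-Computational_Algebra.Polynomial"
begin

definition weight :: "real \<Rightarrow> real \<Rightarrow> real \<Rightarrow> real" where
  "weight \<tau> t x = exp (- (x ^ 6) + \<tau> * x ^ 4 + t * x ^ 2)"

definition wip :: "real \<Rightarrow> real \<Rightarrow> real poly \<Rightarrow> real poly \<Rightarrow> real" where
  "wip \<tau> t p q = (\<integral>x. poly p x * poly q x * weight \<tau> t x \<partial>lborel)"

definition is_mop :: "real \<Rightarrow> real \<Rightarrow> nat \<Rightarrow> real poly \<Rightarrow> bool" where
  "is_mop \<tau> t n p \<longleftrightarrow> degree p = n \<and> lead_coeff p = 1 \<and>
     (\<forall>k<n. wip \<tau> t p (monom 1 k) = 0)"

definition mop :: "real \<Rightarrow> real \<Rightarrow> nat \<Rightarrow> real poly" where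
  "mop \<tau> t n = (THE p. is_mop \<tau> t n p)"

definition beta :: "real \<Rightarrow> real \<Rightarrow> int \<Rightarrow> real" where
  "beta \<tau> t n = (if n \<le> 0 then 0 else
     (THE b. mop \<tau> t (nat n + 1) = [:0, 1:] * mop \<tau> t (nat n) - smult b (mop \<tau> t (nat n - 1))))"

end

theory Submission
  imports Defs "HOL-Probability.Distributions" "HOL-Complex_Analysis.Residue_Theorem"
    "HOL-Real_Asymp.Real_Asymp"
begin

(*
  Write the weight as exp (- V) with V x = x^6 - tau x^4 - t x^2 and let h_k = <P_k, P_k>.
  Integration by parts (the boundary terms vanish) gives Freud's identity
    n h_(n-1) = <P_n', P_(n-1)> = <(P_n P_(n-1))', 1> = <P_n, V' P_(n-1)>,
  with V' = 6 x^5 - 4 tau x^3 - 2 t x. Because the weight is even, the monic orthogonal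
  polynomials satisfy x P_k = P_(k+1) + beta_k P_(k-1) with beta_k = h_k / h_(k-1). Moving
  powers of x across the inner product and expanding x^2 P_n, x^3 P_(n-1), x P_n, x^2 P_(n-1)
  with the recurrence, orthogonality leaves h_n times a polynomial in the beta's; dividing by
  h_(n-1) and using h_n = beta_n h_(n-1) gives the identity.
*)

definition poly_ip :: "(real \<Rightarrow> real) \<Rightarrow> real poly \<Rightarrow> real poly \<Rightarrow> real" where
  "poly_ip w p q = (\<integral>x. poly p x * poly q x * w x \<partial>lborel)"

lemma poly_ip_sym: "poly_ip w p q = poly_ip w q p"
  unfolding poly_ip_def by (simp add: mult_ac)

lemma poly_ip_mult_left: "poly_ip w (r * p) q = poly_ip w p (r * q)"
  unfolding poly_ip_def by (simp add: mult_ac)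

lemma poly_ip_mult_one: "poly_ip w (p * q) 1 = poly_ip w p q"
  unfolding poly_ip_def by simp

lemma poly_ip_smult_left [simp]: "poly_ip w (smult c p) q = c * poly_ip w p q"
  unfolding poly_ip_def by (simp add: mult.assoc)

lemma poly_ip_smult_right [simp]: "poly_ip w p (smult c q) = c * poly_ip w p q"
  unfolding poly_ip_def by (simp add: mult_ac)

lemma poly_ip_zero_right [simp]: "poly_ip w p 0 = 0"
  unfolding poly_ip_def by simp

lemma lborel_integral_odd:
  fixes f :: "real \<Rightarrow> real"
  assumes "\<And>x. f (- x) = - f x"
  shows "(\<integral>x. f x \<partial>lborel) = 0"
proof -
  have "(\<integral>x. f x \<partial>lborel) = \<bar>-1\<bar> *\<^sub>R (\<integral>x. f (0 + (-1) * x) \<partial>lborel)"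
    by (rule lborel_integral_real_affine) simp
  also have "\<dots> = - (\<integral>x. f x \<partial>lborel)"
    using assms by simp
  finally show ?thesis
    by simp
qed

definition has_parity :: "nat \<Rightarrow> real poly \<Rightarrow> bool" where
  "has_parity n p \<longleftrightarrow> (\<forall>x. poly p (- x) = (-1) ^ n * poly p x)"

lemma has_parity_monom: "has_parity n (monom 1 n)"
  unfolding has_parity_def poly_monom by (metis mult_1 power_minus)

lemma x_mult_pCons: "[:0, 1:] * p = pCons 0 (p :: 'a :: comm_semiring_1 poly)"
  by (simp add: mult_pCons_left)

lemma x_mult_monom: "[:0, 1:] * monom 1 k = (monom 1 (Suc k) :: 'a :: comm_semiring_1 poly)"
  by (simp add: x_mult_pCons monom_Suc)

lemma monic_x_mult_diff:
  fixes p q :: "'a :: idom poly"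
  assumes "degree p = m" "lead_coeff p = 1" "degree q \<le> m"
  shows "degree ([:0, 1:] * p - smult c q) = Suc m \<and> lead_coeff ([:0, 1:] * p - smult c q) = 1"
proof -
  have "p \<noteq> 0"
    using assms(2) by auto
  then have deg_xp: "degree ([:0, 1:] * p) = Suc m" and lead_xp: "coeff ([:0, 1:] * p) (Suc m) = 1"
    using assms(1,2) by (auto simp: x_mult_pCons)
  have "degree (- smult c q) < degree ([:0, 1:] * p)"
    using assms(3) deg_xp by simp
  then have "degree ([:0, 1:] * p + - smult c q) = Suc m"
    using deg_xp by (simp only: degree_add_eq_left)
  then show ?thesis
    using lead_xp assms(3) by (simp add: coeff_eq_0)
qed

locale symmetric_weight =
  fixes w :: "real \<Rightarrow> real"
  assumes weight_pos: "w x > 0"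
    and weight_even: "w (- x) = w x"
    and integrable_moment: "integrable lborel (\<lambda>x. x ^ k * w x)"
begin

abbreviation ip :: "real poly \<Rightarrow> real poly \<Rightarrow> real" where
  "ip \<equiv> poly_ip w"

lemma integrable_poly_weight: "integrable lborel (\<lambda>x. poly p x * w x)"
proof -
  have "integrable lborel (\<lambda>x. \<Sum>i\<le>degree p. coeff p i * (x ^ i * w x))"
    by (intro Bochner_Integration.integrable_sum integrable_mult_right integrable_moment)
  then show ?thesis
    by (simp add: poly_altdef sum_distrib_right mult.assoc)
qed

lemma integrable_ip: "integrable lborel (\<lambda>x. poly p x * poly q x * w x)"
  using integrable_poly_weight[of "p * q"] by simp

lemma ip_add_left [simp]: "ip (p + q) r = ip p r + ip q r"
  unfolding poly_ip_def by (simp add: distrib_right integrable_ip)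

lemma ip_diff_left [simp]: "ip (p - q) r = ip p r - ip q r"
  unfolding poly_ip_def by (simp add: left_diff_distrib integrable_ip)

lemma ip_add_right [simp]: "ip r (p + q) = ip r p + ip r q"
  by (simp add: poly_ip_sym[of w r])

lemma ip_diff_right [simp]: "ip r (p - q) = ip r p - ip r q"
  by (simp add: poly_ip_sym[of w r])

lemma ip_expand_right: "ip p q = (\<Sum>i\<le>degree q. coeff q i * ip p (monom 1 i))"
proof -
  have "ip p q = (\<integral>x. (\<Sum>i\<le>degree q. coeff q i * (poly p x * poly (monom 1 i) x * w x)) \<partial>lborel)"
    unfolding poly_ip_def
    by (intro Bochner_Integration.integral_cong refl)
      (simp add: poly_altdef[of q] poly_monom sum_distrib_left sum_distrib_right mult_ac)
  also have "\<dots> = (\<Sum>i\<le>degree q. coeff q i * ip p (monom 1 i))"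
    unfolding poly_ip_def by (simp add: integrable_ip)
  finally show ?thesis .
qed

lemma ip_self_pos:
  assumes "p \<noteq> 0"
  shows "ip p p > 0"
proof -
  have nonneg: "AE x in lborel. 0 \<le> poly p x * poly p x * w x"
    using weight_pos by (simp add: less_imp_le)
  moreover have "ip p p \<noteq> 0"
  proof
    assume "ip p p = 0"
    then have "AE x in lborel. poly p x * poly p x * w x = 0"
      using integral_nonneg_eq_0_iff_AE[OF integrable_ip nonneg] by (simp add: poly_ip_def)
    moreover have "AE x in lborel. x \<notin> {x. poly p x = 0}"
      using assms poly_roots_finite[of p] by (intro AE_not_in finite_imp_null_set_lborel)
    ultimately have "AE (x::real) in lborel. False"
      by eventually_elim (use weight_pos in \<open>simp add: less_le\<close>)
    then show False
      using ae_filter_eq_bot_iff[of lborel] trivial_limit_def by auto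
  qed
  ultimately show ?thesis
    unfolding poly_ip_def by (simp add: integral_nonneg_AE less_le)
qed

lemma ip_parity_odd:
  assumes "has_parity i p" "has_parity j q" "odd (i + j)"
  shows "ip p q = 0"
  unfolding poly_ip_def
proof (rule lborel_integral_odd)
  fix x
  have "(-1::real) ^ i * (-1) ^ j = -1"
    using assms(3) by (simp add: power_add[symmetric])
  then show "poly p (- x) * poly q (- x) * w (- x) = - (poly p x * poly q x * w x)"
    using assms(1,2) unfolding has_parity_def
    by (simp add: weight_even) (metis (no_types, lifting) mult.commute mult.left_commute mult_minus1)
qed


definition monic_orth :: "nat \<Rightarrow> real poly \<Rightarrow> bool" where
  "monic_orth n p \<longleftrightarrow> degree p = n \<and> lead_coeff p = 1 \<and> (\<forall>k<n. ip p (monom 1 k) = 0)"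

lemma monic_orth_ip_monom:
  assumes "monic_orth n p" "degree q \<le> n"
  shows "ip p q = coeff q n * ip p (monom 1 n)"
proof -
  have "ip p q = (\<Sum>i\<le>degree q. coeff q i * ip p (monom 1 i))"
    by (rule ip_expand_right)
  also have "\<dots> = (\<Sum>i\<le>degree q. if i = n then coeff q n * ip p (monom 1 n) else 0)"
    using assms unfolding monic_orth_def by (intro sum.cong) auto
  also have "\<dots> = coeff q n * ip p (monom 1 n)"
    using assms(2) by (auto simp: coeff_eq_0)
  finally show ?thesis .
qed

lemma monic_orth_ip:
  assumes "monic_orth n p" "degree q \<le> n"
  shows "ip p q = coeff q n * ip p p"
proof -
  have "ip p p = ip p (monom 1 n)"
    using monic_orth_ip_monom[OF assms(1), of p] assms(1) unfolding monic_orth_def by auto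
  then show ?thesis
    using monic_orth_ip_monom[OF assms] by simp
qed

lemma monic_orth_ip_lower:
  assumes "monic_orth n p" "degree q < n"
  shows "ip p q = 0"
  using monic_orth_ip[OF assms(1), of q] assms(2) by (simp add: coeff_eq_0)

lemma monic_orth_unique:
  assumes "monic_orth n p" "monic_orth n q"
  shows "p = q"
proof (rule ccontr)
  assume "p \<noteq> q"
  have "degree (p - q) \<le> n" "coeff (p - q) n = 0"
    using assms unfolding monic_orth_def by (auto intro: degree_diff_le)
  with \<open>p \<noteq> q\<close> have "degree (p - q) < n"
    by (metis le_neq_implies_less leading_coeff_0_iff right_minus_eq)
  then have "ip p (p - q) = 0" "ip q (p - q) = 0"
    using assms by (simp_all only: monic_orth_ip_lower)
  then have "ip (p - q) (p - q) = 0"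
    by (simp only: ip_diff_left diff_self)
  with \<open>p \<noteq> q\<close> show False
    using ip_self_pos[of "p - q"] by simp
qed

(* The weight is even, so the diagonal term of the three-term recurrence vanishes by parity. *)
lemma three_term_step:
  assumes p: "monic_orth (Suc n) p" "has_parity (Suc n) p"
    and q: "monic_orth n q" "has_parity n q"
  defines "r \<equiv> [:0, 1:] * p - smult (ip p p / ip q q) q"
  shows "monic_orth (Suc (Suc n)) r \<and> has_parity (Suc (Suc n)) r"
proof -
  have "q \<noteq> 0"
    using q(1) unfolding monic_orth_def by auto
  then have "ip q q > 0"
    by (rule ip_self_pos)
  have deg_lead: "degree r = Suc (Suc n) \<and> lead_coeff r = 1"
    using p(1) q(1) unfolding r_def monic_orth_def by (intro monic_x_mult_diff) auto
  have orth: "ip r (monom 1 k) = 0" if k: "k < Suc (Suc n)" for k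
  proof -
    have ip_r: "ip r (monom 1 k) = ip p (monom 1 (Suc k)) - ip p p / ip q q * ip q (monom 1 k)"
      unfolding r_def ip_diff_left poly_ip_mult_left x_mult_monom by simp
    consider "k < n" | "k = n" | "k = Suc n"
      using k by linarith
    then show ?thesis
    proof cases
      case 1
      then show ?thesis
        using ip_r p(1) q(1) unfolding monic_orth_def by simp
    next
      case 2
      then show ?thesis
        using ip_r \<open>ip q q > 0\<close> monic_orth_ip[OF p(1), of "monom 1 (Suc n)"]
          monic_orth_ip[OF q(1), of "monom 1 n"]
        by (simp add: degree_monom_eq)
    next
      case 3
      then show ?thesis
        using ip_r ip_parity_odd[OF p(2) has_parity_monom] ip_parity_odd[OF q(2) has_parity_monom]
        by simp
    qed
  qed
  have "has_parity (Suc (Suc n)) r"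
    using p(2) q(2) unfolding r_def has_parity_def by (simp add: algebra_simps)
  with deg_lead orth show ?thesis
    unfolding monic_orth_def by blast
qed

fun opoly :: "nat \<Rightarrow> real poly" where
  "opoly 0 = 1"
| "opoly (Suc 0) = [:0, 1:]"
| "opoly (Suc (Suc n)) =
     [:0, 1:] * opoly (Suc n) - smult (ip (opoly (Suc n)) (opoly (Suc n)) / ip (opoly n) (opoly n)) (opoly n)"

lemma opoly_monic_orth_parity: "monic_orth n (opoly n) \<and> has_parity n (opoly n)"
proof (induction n rule: opoly.induct)
  case 1
  show ?case
    by (simp add: monic_orth_def has_parity_def)
next
  case 2
  have "ip [:0, 1:] (monom 1 0) = 0"
    by (rule ip_parity_odd[of 1 _ 0]) (auto simp: has_parity_def)
  then show ?case
    by (simp add: monic_orth_def has_parity_def)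
next
  case (3 n)
  then show ?case
    using three_term_step[of n "opoly (Suc n)" "opoly n"] by simp
qed

lemma monic_orth_opoly: "monic_orth n (opoly n)"
  using opoly_monic_orth_parity by blast

lemma opoly_ne_zero: "opoly n \<noteq> 0"
  using monic_orth_opoly[of n] unfolding monic_orth_def by auto

lemma ip_pderiv_mult:
  assumes p: "monic_orth (Suc n) p" and q: "monic_orth n q"
  shows "ip (pderiv (p * q)) 1 = real (Suc n) * ip q q"
proof -
  have "degree (pderiv q) < Suc n"
    using q unfolding monic_orth_def by (simp add: degree_pderiv)
  then have "ip p (pderiv q) = 0"
    by (rule monic_orth_ip_lower[OF p])
  moreover have "ip q (pderiv p) = real (Suc n) * ip q q"
  proof -
    have "degree (pderiv p) \<le> n" "coeff (pderiv p) n = real (Suc n)"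
      using p unfolding monic_orth_def by (auto simp: degree_pderiv coeff_pderiv)
    then show ?thesis
      using monic_orth_ip[OF q] by simp
  qed
  ultimately show ?thesis
    by (simp add: pderiv_mult poly_ip_mult_one poly_ip_sym[of w "pderiv p"])
qed

definition P :: "int \<Rightarrow> real poly" where
  "P k = (if k < 0 then 0 else opoly (nat k))"

definition h :: "int \<Rightarrow> real" where
  "h k = ip (P k) (P k)"

definition \<beta> :: "int \<Rightarrow> real" where
  "\<beta> k = (if k \<le> 0 then 0 else h k / h (k - 1))"

lemma ip_P_lower:
  assumes "i < j"
  shows "ip (P j) (P i) = 0"
proof (cases "i < 0")
  case False
  then have "degree (P i) < nat j"
    using assms monic_orth_opoly[of "nat i"] by (simp add: P_def monic_orth_def)
  then show ?thesis
    using assms False monic_orth_ip_lower[OF monic_orth_opoly] by (simp add: P_def)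
qed (simp add: P_def)

lemma ip_P_P: "ip (P i) (P j) = (if i = j then h i else 0)"
  using ip_P_lower[of i j] ip_P_lower[of j i] poly_ip_sym[of w "P i" "P j"]
  by (auto simp: h_def neq_iff)

lemma h_pos: "0 \<le> k \<Longrightarrow> h k > 0"
  by (simp add: h_def P_def ip_self_pos opoly_ne_zero)

lemma h_eq_\<beta>_h: "1 \<le> k \<Longrightarrow> h k = \<beta> k * h (k - 1)"
  using h_pos[of "k - 1"] by (simp add: \<beta>_def)

lemma \<beta>_sq_h: "\<beta> k * \<beta> k * h (k - 1) = \<beta> k * h k"
  using h_eq_\<beta>_h[of k] by (cases "1 \<le> k") (simp_all add: \<beta>_def)

lemma x_mult_P:
  assumes "0 \<le> k"
  shows "[:0, 1:] * P k = P (k + 1) + smult (\<beta> k) (P (k - 1))"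
proof -
  obtain m where k: "k = int m"
    using assms nonneg_int_cases by blast
  show ?thesis
  proof (cases m)
    case 0
    then show ?thesis
      using k by (simp add: P_def \<beta>_def)
  next
    case (Suc j)
    have "nat (k + 1) = Suc (Suc j)" "nat k = Suc j" "nat (k - 1) = j"
      using k Suc by auto
    then show ?thesis
      using k Suc by (simp add: P_def \<beta>_def h_def)
  qed
qed

(*
  Since P k = 0 for k < 0, the recurrence x_mult_P fails at k = -1 (it would give 0 = P 0);
  the factor beta 0 = 0 repairs it, so this scaled form holds for every k.
*)
lemma x_mult_P_scaled:
  "smult (\<beta> k) ([:0, 1:] * P (k - 1)) = smult (\<beta> k) (P k + smult (\<beta> (k - 1)) (P (k - 2)))"
  using x_mult_P[of "k - 1"] by (cases "1 \<le> k") (simp_all add: \<beta>_def)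

lemma x2_mult_P:
  assumes "0 \<le> k"
  shows "[:0, 1:] ^ 2 * P k
    = P (k + 2) + smult (\<beta> (k + 1) + \<beta> k) (P k) + smult (\<beta> k * \<beta> (k - 1)) (P (k - 2))"
proof -
  have x_P_succ: "[:0, 1:] * P (k + 1) = P (k + 2) + smult (\<beta> (k + 1)) (P k)"
    using x_mult_P[of "k + 1"] assms by (simp add: add.commute)
  have "[:0, 1:] ^ 2 * P k = [:0, 1:] * P (k + 1) + smult (\<beta> k) ([:0, 1:] * P (k - 1))"
    unfolding power2_eq_square mult.assoc x_mult_P[OF assms] by (simp only: distrib_left mult_smult_right)
  also have "\<dots> = P (k + 2) + smult (\<beta> (k + 1) + \<beta> k) (P k) + smult (\<beta> k * \<beta> (k - 1)) (P (k - 2))"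
    unfolding x_mult_P_scaled x_P_succ by (simp add: smult_add_left smult_add_right)
  finally show ?thesis .
qed

lemma x3_mult_P:
  assumes "0 \<le> k"
  shows "[:0, 1:] ^ 3 * P k
    = P (k + 3) + smult (\<beta> (k + 2) + \<beta> (k + 1) + \<beta> k) (P (k + 1))
      + smult (\<beta> k * (\<beta> (k + 1) + \<beta> k + \<beta> (k - 1))) (P (k - 1))
      + smult (\<beta> k * \<beta> (k - 1) * \<beta> (k - 2)) (P (k - 3))"
proof -
  have x_P_succ2: "[:0, 1:] * P (k + 2) = P (k + 3) + smult (\<beta> (k + 2)) (P (k + 1))"
    using x_mult_P[of "k + 2"] assms by (simp add: add.commute)
  have x_P_pred2: "smult (\<beta> (k - 1)) ([:0, 1:] * P (k - 2))
      = smult (\<beta> (k - 1)) (P (k - 1) + smult (\<beta> (k - 2)) (P (k - 3)))"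
    using x_mult_P_scaled[of "k - 1"] by (simp add: algebra_simps)
  have "[:0, 1:] ^ 3 * P k = [:0, 1:] * ([:0, 1:] ^ 2 * P k)"
    by (simp only: power3_eq_cube power2_eq_square mult.assoc)
  also have "\<dots> = [:0, 1:] * P (k + 2) + smult (\<beta> (k + 1) + \<beta> k) ([:0, 1:] * P k)
      + smult (\<beta> k) (smult (\<beta> (k - 1)) ([:0, 1:] * P (k - 2)))"
    unfolding x2_mult_P[OF assms] by (simp only: distrib_left mult_smult_right smult_smult)
  also have "\<dots> = P (k + 3) + smult (\<beta> (k + 2) + \<beta> (k + 1) + \<beta> k) (P (k + 1))
      + smult (\<beta> k * (\<beta> (k + 1) + \<beta> k + \<beta> (k - 1))) (P (k - 1))
      + smult (\<beta> k * \<beta> (k - 1) * \<beta> (k - 2)) (P (k - 3))"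
    unfolding x_P_pred2 x_P_succ2 x_mult_P[OF assms]
    by (simp add: smult_add_left smult_add_right algebra_simps)
  finally show ?thesis .
qed

lemma ip_P_x_P:
  assumes "1 \<le> k"
  shows "ip (P k) ([:0, 1:] * P (k - 1)) = h k"
proof -
  have "[:0, 1:] * P (k - 1) = P k + smult (\<beta> (k - 1)) (P (k - 2))"
    using x_mult_P[of "k - 1"] assms by simp
  then show ?thesis
    by (simp add: ip_P_P)
qed

lemma ip_x_P_x2_P:
  assumes "1 \<le> k"
  shows "ip ([:0, 1:] * P k) ([:0, 1:] ^ 2 * P (k - 1)) = h k * (\<beta> (k - 1) + \<beta> k + \<beta> (k + 1))"
proof -
  have x_P: "[:0, 1:] * P k = P (k + 1) + smult (\<beta> k) (P (k - 1))"
    using x_mult_P assms by simp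
  have x2_P: "[:0, 1:] ^ 2 * P (k - 1)
      = P (k + 1) + smult (\<beta> k + \<beta> (k - 1)) (P (k - 1)) + smult (\<beta> (k - 1) * \<beta> (k - 2)) (P (k - 3))"
    using x2_mult_P[of "k - 1"] assms by (simp add: add.commute)
  have "ip ([:0, 1:] * P k) ([:0, 1:] ^ 2 * P (k - 1))
      = h (k + 1) + (\<beta> k + \<beta> (k - 1)) * (\<beta> k * h (k - 1))"
    unfolding x_P x2_P by (simp add: ip_P_P algebra_simps)
  also have "\<dots> = h k * (\<beta> (k - 1) + \<beta> k + \<beta> (k + 1))"
    using h_eq_\<beta>_h[of "k + 1"] h_eq_\<beta>_h[of k] assms by (simp add: algebra_simps)
  finally show ?thesis .
qed

lemma ip_x2_P_x3_P:
  assumes "1 \<le> k"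
  shows "ip ([:0, 1:] ^ 2 * P k) ([:0, 1:] ^ 3 * P (k - 1))
    = h k * (\<beta> (k + 2) * \<beta> (k + 1) + (\<beta> (k + 1) + \<beta> k) * (\<beta> (k + 1) + \<beta> k + \<beta> (k - 1))
        + \<beta> (k - 1) * (\<beta> k + \<beta> (k - 1) + \<beta> (k - 2)))"
proof -
  have x3_P: "[:0, 1:] ^ 3 * P (k - 1)
      = P (k + 2) + smult (\<beta> (k + 1) + \<beta> k + \<beta> (k - 1)) (P k)
        + smult (\<beta> (k - 1) * (\<beta> k + \<beta> (k - 1) + \<beta> (k - 2))) (P (k - 2))
        + smult (\<beta> (k - 1) * \<beta> (k - 2) * \<beta> (k - 3)) (P (k - 4))"
    using x3_mult_P[of "k - 1"] assms by (simp add: add.commute)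
  have "ip ([:0, 1:] ^ 2 * P k) ([:0, 1:] ^ 3 * P (k - 1))
      = h (k + 2) + (\<beta> (k + 1) + \<beta> k) * (\<beta> (k + 1) + \<beta> k + \<beta> (k - 1)) * h k
        + \<beta> k * (\<beta> k + \<beta> (k - 1) + \<beta> (k - 2)) * (\<beta> (k - 1) * \<beta> (k - 1) * h (k - 2))"
    unfolding x2_mult_P[OF order_trans[OF zero_le_one assms]] x3_P by (simp add: ip_P_P algebra_simps)
  also have "\<beta> (k - 1) * \<beta> (k - 1) * h (k - 2) = \<beta> (k - 1) * h (k - 1)"
    using \<beta>_sq_h[of "k - 1"] by simp
  also have "h (k + 2) = \<beta> (k + 2) * \<beta> (k + 1) * h k"
    using h_eq_\<beta>_h[of "k + 2"] h_eq_\<beta>_h[of "k + 1"] assms by (simp add: add.commute)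
  finally show ?thesis
    using h_eq_\<beta>_h[of k] assms by (simp add: algebra_simps)
qed

lemma ip_pderiv_P_mult_P:
  assumes "1 \<le> k"
  shows "ip (pderiv (P k * P (k - 1))) 1 = of_int k * h (k - 1)"
proof -
  define n where "n = nat (k - 1)"
  then have n: "k = int (Suc n)"
    using assms by simp
  have "P k = opoly (Suc n)"
    unfolding n P_def by (simp del: of_nat_Suc)
  moreover have "P (k - 1) = opoly n"
    using n by (simp add: P_def)
  ultimately show ?thesis
    using ip_pderiv_mult[OF monic_orth_opoly monic_orth_opoly] n by (simp add: h_def)
qed

end

definition potential :: "real \<Rightarrow> real \<Rightarrow> real poly" where
  "potential \<tau> t = [:0, 0, - t, 0, - \<tau>, 0, 1:]"

lemma weight_eq_exp_potential: "weight \<tau> t x = exp (- poly (potential \<tau> t) x)"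
  by (simp add: weight_def potential_def algebra_simps power_numeral_reduce)

lemma pderiv_potential:
  "pderiv (potential \<tau> t) = smult 6 ([:0, 1:] ^ 5) - smult (4 * \<tau>) ([:0, 1:] ^ 3) - smult (2 * t) [:0, 1:]"
  by (simp add: potential_def pderiv_pCons poly_eq_poly_eq_iff[symmetric] fun_eq_iff
      algebra_simps power_numeral_reduce)

lemma weight_le_gaussian: "\<exists>C. \<forall>x. weight \<tau> t x \<le> C * exp (- (x ^ 2) / 2)"
proof -
  have "bounded (range (\<lambda>x. exp (x ^ 2 / 2) * weight \<tau> t x))"
    unfolding weight_def
    by (intro continuous_bounded_at_infinity_imp_bounded) (real_asymp, real_asymp, auto intro!: continuous_intros)
  then obtain C where C: "\<And>x. \<bar>exp (x ^ 2 / 2) * weight \<tau> t x\<bar> \<le> C"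
    unfolding bounded_iff by auto
  have "weight \<tau> t x \<le> C * exp (- (x ^ 2) / 2)" for x
  proof -
    have "weight \<tau> t x = exp (- (x ^ 2) / 2) * (exp (x ^ 2 / 2) * weight \<tau> t x)"
      by (simp add: exp_minus field_simps)
    also have "\<dots> \<le> exp (- (x ^ 2) / 2) * C"
      using C[of x] by (intro mult_left_mono) auto
    finally show ?thesis
      by (simp add: mult.commute)
  qed
  then show ?thesis
    by blast
qed

lemma integrable_moment_weight: "integrable lborel (\<lambda>x. x ^ k * weight \<tau> t x)"
proof -
  obtain C where C: "\<And>x. weight \<tau> t x \<le> C * exp (- (x ^ 2) / 2)"
    using weight_le_gaussian by blast
  have "C \<ge> 0"
    using C[of 0] by (simp add: weight_def)
  show ?thesis
  proof (rule Bochner_Integration.integrable_bound)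
    show "integrable lborel (\<lambda>x. C * sqrt (2 * pi) * (std_normal_density x * \<bar>x\<bar> ^ k))"
      using integrable_std_normal_moment_abs by simp
    show "AE x in lborel. norm (x ^ k * weight \<tau> t x)
        \<le> norm (C * sqrt (2 * pi) * (std_normal_density x * \<bar>x\<bar> ^ k))"
    proof (rule AE_I2)
      fix x :: real
      have "norm (x ^ k * weight \<tau> t x) = \<bar>x\<bar> ^ k * weight \<tau> t x"
        by (simp add: weight_def abs_mult power_abs)
      also have "\<dots> \<le> \<bar>x\<bar> ^ k * (C * exp (- (x ^ 2) / 2))"
        using C[of x] by (intro mult_left_mono) auto
      also have "\<dots> \<le> norm (C * sqrt (2 * pi) * (std_normal_density x * \<bar>x\<bar> ^ k))"
        using \<open>C \<ge> 0\<close> by (simp add: normal_density_def abs_mult)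
      finally show "norm (x ^ k * weight \<tau> t x)
          \<le> norm (C * sqrt (2 * pi) * (std_normal_density x * \<bar>x\<bar> ^ k))" .
    qed
  qed (simp add: weight_def)
qed

lemma symmetric_weight_weight: "symmetric_weight (weight \<tau> t)"
  by unfold_locales (simp add: weight_def, simp add: weight_def, rule integrable_moment_weight)

interpretation W: symmetric_weight "weight \<tau> t" for \<tau> t
  by (rule symmetric_weight_weight)

lemma wip_eq_poly_ip: "wip \<tau> t = poly_ip (weight \<tau> t)"
  by (simp add: fun_eq_iff wip_def poly_ip_def)

lemma weight_has_derivative:
  "(weight \<tau> t has_real_derivative - poly (pderiv (potential \<tau> t)) x * weight \<tau> t x) (at x)"
  unfolding weight_eq_exp_potential[abs_def]
  by (auto intro!: derivative_eq_intros poly_DERIV)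

lemma tendsto_poly_weight:
  "((\<lambda>x. poly p x * weight \<tau> t x) \<longlongrightarrow> 0) at_top"
  "((\<lambda>x. poly p x * weight \<tau> t x) \<longlongrightarrow> 0) at_bot"
proof -
  have poly_weight: "(\<lambda>x. poly p x * weight \<tau> t x) = (\<lambda>x. \<Sum>i\<le>degree p. coeff p i * (x ^ i * weight \<tau> t x))"
    by (simp add: poly_altdef sum_distrib_right mult.assoc)
  have "((\<lambda>x. x ^ i * weight \<tau> t x) \<longlongrightarrow> 0) at_top" "((\<lambda>x. x ^ i * weight \<tau> t x) \<longlongrightarrow> 0) at_bot" for i
    unfolding weight_def by real_asymp+
  then show "((\<lambda>x. poly p x * weight \<tau> t x) \<longlongrightarrow> 0) at_top" "((\<lambda>x. poly p x * weight \<tau> t x) \<longlongrightarrow> 0) at_bot"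
    unfolding poly_weight by (auto intro!: tendsto_null_sum tendsto_mult_right_zero)
qed

lemma wip_pderiv_one: "wip \<tau> t (pderiv p) 1 = wip \<tau> t p (pderiv (potential \<tau> t))"
proof -
  define f where "f x = poly (pderiv p) x * weight \<tau> t x
    - poly p x * poly (pderiv (potential \<tau> t)) x * weight \<tau> t x" for x
  define F where "F x = poly p x * weight \<tau> t x" for x
  have F_deriv: "(F has_vector_derivative f x) (at x)" for x
    using DERIV_mult[OF poly_DERIV[of p x] weight_has_derivative[of \<tau> t x]]
    unfolding F_def f_def has_real_derivative_iff_has_vector_derivative[symmetric]
    by (simp add: algebra_simps)
  have "isCont f x" for x
    unfolding f_def weight_def by (intro continuous_intros)
  moreover have "integrable lborel f"
    unfolding f_def using W.integrable_ip W.integrable_poly_weight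
    by (intro Bochner_Integration.integrable_diff) simp_all
  ultimately have "(LBINT x=-\<infinity>..\<infinity>. f x) = 0 - 0"
    using F_deriv tendsto_poly_weight
    by (intro interval_integral_FTC_integrable[where F = F])
      (auto simp: set_integrable_def F_def[abs_def] ereal_tendsto_simps1)
  then have "(\<integral>x. f x \<partial>lborel) = 0"
    by (simp add: interval_lebesgue_integral_def set_lebesgue_integral_def)
  then show ?thesis
    unfolding f_def wip_def using W.integrable_ip W.integrable_poly_weight
    by (subst (asm) Bochner_Integration.integral_diff) simp_all
qed

lemma is_mop_iff_monic_orth: "is_mop \<tau> t = W.monic_orth \<tau> t"
  by (simp add: fun_eq_iff is_mop_def W.monic_orth_def wip_eq_poly_ip)

lemma mop_eq_opoly: "mop \<tau> t n = W.opoly \<tau> t n"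
  unfolding mop_def is_mop_iff_monic_orth
  by (rule the_equality) (auto intro: W.monic_orth_opoly W.monic_orth_unique)

lemma beta_eq: "beta \<tau> t k = W.\<beta> \<tau> t k"
proof (cases "k \<le> 0")
  case False
  have rec: "W.P \<tau> t (k + 1) = [:0, 1:] * W.P \<tau> t k - smult b (W.P \<tau> t (k - 1)) \<longleftrightarrow> b = W.\<beta> \<tau> t k" for b
  proof -
    have "W.P \<tau> t (k - 1) \<noteq> 0"
      using False by (simp add: W.P_def W.opoly_ne_zero)
    then have "smult b (W.P \<tau> t (k - 1)) = smult (W.\<beta> \<tau> t k) (W.P \<tau> t (k - 1)) \<longleftrightarrow> b = W.\<beta> \<tau> t k"
      by (metis eq_iff_diff_eq_0 smult_diff_left smult_eq_0_iff)
    then show ?thesis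
      using W.x_mult_P[of k \<tau> t] False by auto
  qed
  have "mop \<tau> t (nat k + 1) = W.P \<tau> t (k + 1)" "mop \<tau> t (nat k) = W.P \<tau> t k"
    "mop \<tau> t (nat k - 1) = W.P \<tau> t (k - 1)"
    using False by (simp_all add: mop_eq_opoly W.P_def nat_diff_distrib' nat_add_distrib)
  then show ?thesis
    using False rec unfolding beta_def by simp
qed (simp add: beta_def W.\<beta>_def)

lemma wip_pderiv_potential_mult:
  "wip \<tau> t p (pderiv (potential \<tau> t) * q)
    = 6 * wip \<tau> t ([:0, 1:] ^ 2 * p) ([:0, 1:] ^ 3 * q)
      - 4 * \<tau> * wip \<tau> t ([:0, 1:] * p) ([:0, 1:] ^ 2 * q) - 2 * t * wip \<tau> t p ([:0, 1:] * q)"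
proof -
  have "pderiv (potential \<tau> t) * q = smult 6 ([:0, 1:] ^ 2 * ([:0, 1:] ^ 3 * q))
      - smult (4 * \<tau>) ([:0, 1:] * ([:0, 1:] ^ 2 * q)) - smult (2 * t) ([:0, 1:] * q)"
    by (simp add: pderiv_potential poly_eq_poly_eq_iff[symmetric] fun_eq_iff algebra_simps
        power_numeral_reduce)
  then show ?thesis
    by (simp only: wip_eq_poly_ip W.ip_diff_right poly_ip_smult_right poly_ip_mult_left)
qed

theorem lemma3p1:
  fixes \<tau> t :: real and n :: nat
  assumes "n \<ge> 1"
  defines "b \<equiv> (\<lambda>k::int. beta \<tau> t (int n + k))"
  shows "6 * b 0 * (b (-2) * b (-1) + (b (-1))^2 + 2 * b (-1) * b 0 + b (-1) * b 1
            + (b 0)^2 + 2 * b 0 * b 1 + (b 1)^2 + b 1 * b 2)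
         - 4 * \<tau> * b 0 * (b (-1) + b 0 + b 1) - 2 * t * b 0 = real n"
proof -
  define k where "k = int n"
  have k: "1 \<le> k"
    using assms(1) by (simp add: k_def)
  let ?P = "W.P \<tau> t" and ?h = "W.h \<tau> t" and ?\<beta> = "W.\<beta> \<tau> t"
  define S\<^sub>3 where "S\<^sub>3 = ?\<beta> (k - 1) + ?\<beta> k + ?\<beta> (k + 1)"
  define S\<^sub>5 where "S\<^sub>5 = ?\<beta> (k + 2) * ?\<beta> (k + 1)
    + (?\<beta> (k + 1) + ?\<beta> k) * (?\<beta> (k + 1) + ?\<beta> k + ?\<beta> (k - 1))
    + ?\<beta> (k - 1) * (?\<beta> k + ?\<beta> (k - 1) + ?\<beta> (k - 2))"
  have "?h (k - 1) > 0"
    using k by (intro W.h_pos) simp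
  have "real n * ?h (k - 1) = wip \<tau> t (pderiv (?P k * ?P (k - 1))) 1"
    using W.ip_pderiv_P_mult_P[OF k] by (simp add: k_def wip_eq_poly_ip)
  also have "\<dots> = wip \<tau> t (?P k) (pderiv (potential \<tau> t) * ?P (k - 1))"
    unfolding wip_pderiv_one by (simp add: wip_def mult_ac)
  also have "\<dots> = ?h k * (6 * S\<^sub>5 - 4 * \<tau> * S\<^sub>3 - 2 * t)"
    unfolding wip_pderiv_potential_mult unfolding wip_eq_poly_ip S\<^sub>5_def S\<^sub>3_def
      W.ip_x2_P_x3_P[OF k] W.ip_x_P_x2_P[OF k] W.ip_P_x_P[OF k]
    by (simp add: algebra_simps)
  also have "\<dots> = ?h (k - 1) * (?\<beta> k * (6 * S\<^sub>5 - 4 * \<tau> * S\<^sub>3 - 2 * t))"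
    using W.h_eq_\<beta>_h[OF k] by simp
  finally have "real n = ?\<beta> k * (6 * S\<^sub>5 - 4 * \<tau> * S\<^sub>3 - 2 * t)"
    using \<open>?h (k - 1) > 0\<close> by simp
  moreover have "b j = ?\<beta> (k + j)" for j
    by (simp add: b_def beta_eq k_def)
  ultimately show ?thesis
    unfolding S\<^sub>5_def S\<^sub>3_def by (simp add: power2_eq_square algebra_simps)
qed

end
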